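(* Let $G$ be a group acting by graph automorphisms on connected graphs $\Gamma_1$ and $\Gamma_2$, each with finitely many orbits of edges. Suppose there is a bijection $\beta: V(\Gamma_1)\to V(\Gamma_2)$ between the vertex sets such that $\beta(gv)=g\beta(v)$ for all $g\in G$ and $v\in V(\Gamma_1)$. Then $\Gamma_1$ and $\Gamma_2$ (with combinatorial metrics) are quasi-isometric.
   Context: Graphs are equipped with the combinatorial metric (each edge has length 1); they need not be locally finite. Metric spaces $M_1,M_2$ are quasi-isometric if there are $\lambda>0$, $c\ge0$, $\varepsilon\ge0$ and a map $\alpha:M_1\to M_2$ with $\frac1\lambda d(x,y)-c\le d(\alpha(x),\alpha(y))\le \lambda d(x,y)+c$ for all $x,y\in M_1$, and every point of $M_2$ within distance $\varepsilon$ of $\alpha(M_1)$. *)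

theory Defs
  imports Complex_Main "HOL-Algebra.Group_Action"
begin

definition graph :: "'v set \<Rightarrow> 'v set set \<Rightarrow> bool" where
  "graph V E \<longleftrightarrow> E \<subseteq> {{u, v} | u v. u \<in> V \<and> v \<in> V \<and> u \<noteq> v}"

definition walk :: "'v set \<Rightarrow> 'v set set \<Rightarrow> 'v list \<Rightarrow> bool" where
  "walk V E xs \<longleftrightarrow> xs \<noteq> [] \<and> set xs \<subseteq> V \<and>
     (\<forall>i. Suc i < length xs \<longrightarrow> {xs ! i, xs ! Suc i} \<in> E)"

definition graph_connected :: "'v set \<Rightarrow> 'v set set \<Rightarrow> bool" where
  "graph_connected V E \<longleftrightarrow>
     (\<forall>u\<in>V. \<forall>v\<in>V. \<exists>xs. walk V E xs \<and> hd xs = u \<and> last xs = v)"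

definition gdist :: "'v set \<Rightarrow> 'v set set \<Rightarrow> 'v \<Rightarrow> 'v \<Rightarrow> real" where
  "gdist V E u v = real (LEAST n. \<exists>xs. walk V E xs \<and> hd xs = u \<and> last xs = v \<and> length xs = Suc n)"

definition acts_by_automorphisms ::
  "('g, 'm) monoid_scheme \<Rightarrow> ('g \<Rightarrow> 'v \<Rightarrow> 'v) \<Rightarrow> 'v set \<Rightarrow> 'v set set \<Rightarrow> bool" where
  "acts_by_automorphisms G \<phi> V E \<longleftrightarrow> group_action G V \<phi> \<and>
     (\<forall>g\<in>carrier G. \<forall>u\<in>V. \<forall>v\<in>V. {u, v} \<in> E \<longleftrightarrow> {\<phi> g u, \<phi> g v} \<in> E)"

definition finitely_many_edge_orbits ::
  "('g, 'm) monoid_scheme \<Rightarrow> ('g \<Rightarrow> 'v \<Rightarrow> 'v) \<Rightarrow> 'v set set \<Rightarrow> bool" where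
  "finitely_many_edge_orbits G \<phi> E \<longleftrightarrow> finite (orbits G E (\<lambda>g e. \<phi> g ` e))"

definition quasi_isometric ::
  "'a set \<Rightarrow> ('a \<Rightarrow> 'a \<Rightarrow> real) \<Rightarrow> 'b set \<Rightarrow> ('b \<Rightarrow> 'b \<Rightarrow> real) \<Rightarrow> bool" where
  "quasi_isometric M1 d1 M2 d2 \<longleftrightarrow>
     (\<exists>lam::real>0. \<exists>c::real\<ge>0. \<exists>\<epsilon>::real\<ge>0. \<exists>\<alpha>. \<alpha> ` M1 \<subseteq> M2 \<and>
        (\<forall>x\<in>M1. \<forall>y\<in>M1. d1 x y / lam - c \<le> d2 (\<alpha> x) (\<alpha> y) \<and> d2 (\<alpha> x) (\<alpha> y) \<le> lam * d1 x y + c) \<and>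
        (\<forall>z\<in>M2. \<exists>x\<in>M1. d2 z (\<alpha> x) \<le> \<epsilon>))"

end

theory Submission
  imports Defs
begin

text \<open>An equivariant map between the vertex sets is Lipschitz: the distance between the
  images of the two ends of an edge is invariant under the action, so it takes only finitely
  many values, one per edge orbit, and a bound on edges propagates along geodesics. Applying
  this to \<open>\<beta>\<close> and to its (again equivariant) inverse makes \<open>\<beta>\<close> bi-Lipschitz, and being
  surjective it is a quasi-isometry.\<close>

lemma walk_Cons_Cons:
  "walk V E (x # y # xs) \<longleftrightarrow> x \<in> V \<and> {x, y} \<in> E \<and> walk V E (y # xs)"
proof
  assume w: "walk V E (x # y # xs)"
  then have "{(x # y # xs) ! Suc i, (x # y # xs) ! Suc (Suc i)} \<in> E"
    if "Suc i < length (y # xs)" for i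
    using that unfolding walk_def by (metis length_Cons Suc_less_eq)
  moreover have "{(x # y # xs) ! 0, (x # y # xs) ! Suc 0} \<in> E"
    using w unfolding walk_def by force
  ultimately show "x \<in> V \<and> {x, y} \<in> E \<and> walk V E (y # xs)"
    using w by (simp add: walk_def)
next
  assume "x \<in> V \<and> {x, y} \<in> E \<and> walk V E (y # xs)"
  then show "walk V E (x # y # xs)"
    unfolding walk_def by (auto simp: nth_Cons split: nat.split)
qed

lemma walk_ConsD: "walk V E (x # xs) \<Longrightarrow> xs \<noteq> [] \<Longrightarrow> walk V E xs"
  by (cases xs) (auto simp: walk_Cons_Cons)

lemma walk_append_tl:
  "walk V E xs \<Longrightarrow> walk V E ys \<Longrightarrow> last xs = hd ys \<Longrightarrow> walk V E (xs @ tl ys)"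
proof (induction xs)
  case Nil
  then show ?case by (simp add: walk_def)
next
  case (Cons x xs)
  show ?case
  proof (cases xs)
    case Nil
    then show ?thesis using Cons.prems by (cases ys) auto
  next
    case (Cons y zs)
    then have "walk V E (xs @ tl ys)"
      using Cons.IH[OF walk_ConsD[OF Cons.prems(1)] Cons.prems(2)] Cons.prems(3) by simp
    then show ?thesis using Cons.prems Cons by (simp add: walk_Cons_Cons)
  qed
qed

lemma walk_map:
  assumes "walk V E xs" "h ` V \<subseteq> V'"
    and "\<And>u v. u \<in> V \<Longrightarrow> v \<in> V \<Longrightarrow> {u, v} \<in> E \<Longrightarrow> {h u, h v} \<in> E'"
  shows "walk V' E' (map h xs)"
  using assms unfolding walk_def by (auto simp: subset_iff)

lemma gdist_le_walk:
  assumes "walk V E xs" "hd xs = u" "last xs = v"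
  shows "gdist V E u v \<le> real (length xs - 1)"
proof -
  have "length xs = Suc (length xs - 1)"
    using assms(1) by (cases xs) (auto simp: walk_def)
  then have "(LEAST n. \<exists>xs. walk V E xs \<and> hd xs = u \<and> last xs = v \<and> length xs = Suc n)
      \<le> length xs - 1"
    using assms by (intro Least_le) blast
  then show ?thesis unfolding gdist_def by simp
qed

lemma gdist_nonneg: "gdist V E u v \<ge> 0"
  by (simp add: gdist_def)

lemma gdist_self: "v \<in> V \<Longrightarrow> gdist V E v v = 0"
  using gdist_le_walk[of V E "[v]" v v] gdist_nonneg[of V E v v] by (simp add: walk_def)

lemma shortest_walk_exists:
  assumes "graph_connected V E" "u \<in> V" "v \<in> V"
  obtains xs where "walk V E xs" "hd xs = u" "last xs = v" "real (length xs - 1) = gdist V E u v"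
proof -
  obtain xs where xs: "walk V E xs" "hd xs = u" "last xs = v"
    using assms unfolding graph_connected_def by blast
  then have "length xs = Suc (length xs - 1)"
    by (cases xs) (auto simp: walk_def)
  then have "\<exists>n xs. walk V E xs \<and> hd xs = u \<and> last xs = v \<and> length xs = Suc n"
    using xs by blast
  from LeastI_ex[OF this] show ?thesis
    using that unfolding gdist_def by fastforce
qed

lemma gdist_triangle:
  assumes "graph_connected V E" "u \<in> V" "v \<in> V" "w \<in> V"
  shows "gdist V E u w \<le> gdist V E u v + gdist V E v w"
proof -
  obtain xs where xs: "walk V E xs" "hd xs = u" "last xs = v"
      "real (length xs - 1) = gdist V E u v"
    using shortest_walk_exists assms by metis
  obtain ys where ys: "walk V E ys" "hd ys = v" "last ys = w"
      "real (length ys - 1) = gdist V E v w"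
    using shortest_walk_exists assms by metis
  have ne: "xs \<noteq> []" "ys \<noteq> []"
    using xs ys by (auto simp: walk_def)
  have "hd (xs @ tl ys) = u" "last (xs @ tl ys) = w"
    using xs ys ne by (auto simp: last_append last_tl) (metis list.collapse last_ConsL)
  then have "gdist V E u w \<le> real (length (xs @ tl ys) - 1)"
    using gdist_le_walk walk_append_tl xs ys by metis
  also have "\<dots> = real (length xs - 1) + real (length ys - 1)"
    using ne by (cases xs; cases ys) auto
  finally show ?thesis using xs ys by simp
qed

lemma gdist_hom_le:
  assumes "graph_connected V E" "a \<in> V" "b \<in> V" "h ` V \<subseteq> V'"
    and "\<And>u v. u \<in> V \<Longrightarrow> v \<in> V \<Longrightarrow> {u, v} \<in> E \<Longrightarrow> {h u, h v} \<in> E'"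
  shows "gdist V' E' (h a) (h b) \<le> gdist V E a b"
proof -
  obtain xs where xs: "walk V E xs" "hd xs = a" "last xs = b"
      "real (length xs - 1) = gdist V E a b"
    using shortest_walk_exists assms(1-3) by metis
  then have "xs \<noteq> []" by (simp add: walk_def)
  then have "hd (map h xs) = h a" "last (map h xs) = h b"
    using xs by (simp_all add: hd_map last_map)
  then have "gdist V' E' (h a) (h b) \<le> real (length (map h xs) - 1)"
    using gdist_le_walk walk_map[OF xs(1) assms(4,5)] by metis
  then show ?thesis using xs by simp
qed

lemma acts_by_automorphisms_image_subset:
  assumes "acts_by_automorphisms G \<phi> V E" "g \<in> carrier G"
  shows "\<phi> g ` V \<subseteq> V"
proof -
  have "group_action G V \<phi>"
    using assms(1) by (simp add: acts_by_automorphisms_def)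
  then show ?thesis
    using group_action.surj_prop[OF _ assms(2)] by blast
qed

lemma gdist_action_le:
  assumes "acts_by_automorphisms G \<phi> V E" "g \<in> carrier G"
    and "graph_connected V E" "a \<in> V" "b \<in> V"
  shows "gdist V E (\<phi> g a) (\<phi> g b) \<le> gdist V E a b"
proof (rule gdist_hom_le[OF assms(3-5) acts_by_automorphisms_image_subset[OF assms(1,2)]])
  show "{\<phi> g u, \<phi> g v} \<in> E" if "u \<in> V" "v \<in> V" "{u, v} \<in> E" for u v
    using assms(1,2) that by (simp add: acts_by_automorphisms_def)
qed

lemma gdist_le_mult_if_edges_bounded:
  assumes "graph_connected V1 E1" "graph_connected V2 E2" "f ` V1 \<subseteq> V2"
    and edge: "\<And>u v. u \<in> V1 \<Longrightarrow> v \<in> V1 \<Longrightarrow> {u, v} \<in> E1 \<Longrightarrow> gdist V2 E2 (f u) (f v) \<le> K"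
    and "x \<in> V1" "y \<in> V1"
  shows "gdist V2 E2 (f x) (f y) \<le> K * gdist V1 E1 x y"
proof -
  have "gdist V2 E2 (f (hd xs)) (f (last xs)) \<le> K * real (length xs - 1)"
    if "walk V1 E1 xs" for xs
    using that
  proof (induction xs rule: induct_list012)
    case (2 x)
    then have "f x \<in> V2"
      using assms(3) by (auto simp: walk_def)
    then show ?case by (simp add: gdist_self)
  next
    case (3 x y zs)
    then have x: "x \<in> V1" "{x, y} \<in> E1" and w: "walk V1 E1 (y # zs)"
      by (simp_all add: walk_Cons_Cons)
    then have y: "y \<in> V1" "last (y # zs) \<in> V1"
      by (auto simp: walk_def)
    have "gdist V2 E2 (f x) (f (last (y # zs)))
        \<le> gdist V2 E2 (f x) (f y) + gdist V2 E2 (f y) (f (last (y # zs)))"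
      using gdist_triangle[OF assms(2)] assms(3) x y by blast
    also have "\<dots> \<le> K + K * real (length (y # zs) - 1)"
      using edge[OF x(1) y(1) x(2)] "3.IH"(2)[OF w] by simp
    finally show ?case
      by (simp add: algebra_simps)
  qed (simp add: walk_def)
  moreover obtain xs where "walk V1 E1 xs" "hd xs = x" "last xs = y"
      "real (length xs - 1) = gdist V1 E1 x y"
    using shortest_walk_exists[OF assms(1,5,6)] .
  ultimately show ?thesis by metis
qed

lemma bounded_if_finite_orbits:
  fixes h :: "'b \<Rightarrow> real"
  assumes "finite (orbits G X \<psi>)"
    and "\<And>x. x \<in> X \<Longrightarrow> x \<in> orbit G \<psi> x"
    and "\<And>g x. g \<in> carrier G \<Longrightarrow> x \<in> X \<Longrightarrow> h (\<psi> g x) \<le> h x"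
  shows "\<exists>K. \<forall>x\<in>X. h x \<le> K"
proof -
  have orbits_eq: "orbits G X \<psi> = orbit G \<psi> ` X"
    by (auto simp: orbits_def)
  then obtain R where R: "R \<subseteq> X" "finite R" "orbits G X \<psi> = orbit G \<psi> ` R"
    using finite_subset_image[OF assms(1)] by (metis order_refl)
  have "h x \<le> Max (h ` R)" if x: "x \<in> X" for x
  proof -
    obtain r where r: "r \<in> R" "orbit G \<psi> x = orbit G \<psi> r"
      using R(3) orbits_eq x by (metis image_eqI imageE)
    then obtain g where "g \<in> carrier G" "x = \<psi> g r"
      using assms(2)[OF x] by (auto simp: orbit_def)
    then have "h x \<le> h r"
      using assms(3) R(1) r(1) by blast
    also have "\<dots> \<le> Max (h ` R)"
      using R(2) r(1) by simp
    finally show ?thesis .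
  qed
  then show ?thesis by blast
qed

lemma equivariant_edge_bounded:
  assumes "graph V1 E1" "acts_by_automorphisms G \<phi>1 V1 E1"
    and "acts_by_automorphisms G \<phi>2 V2 E2" "graph_connected V2 E2"
    and "finitely_many_edge_orbits G \<phi>1 E1" "f ` V1 \<subseteq> V2"
    and equivariant: "\<forall>g\<in>carrier G. \<forall>v\<in>V1. f (\<phi>1 g v) = \<phi>2 g (f v)"
  obtains K where "\<And>u v. u \<in> V1 \<Longrightarrow> v \<in> V1 \<Longrightarrow> {u, v} \<in> E1 \<Longrightarrow> gdist V2 E2 (f u) (f v) \<le> K"
proof -
  define h where "h e = Max ((\<lambda>(a, b). gdist V2 E2 (f a) (f b)) ` (e \<times> e))" for e
  have ends: "\<exists>a b. e = {a, b} \<and> a \<in> V1 \<and> b \<in> V1" if "e \<in> E1" for e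
    using assms(1) that unfolding graph_def by blast
  have h_ge: "gdist V2 E2 (f a) (f b) \<le> h e" if "e \<in> E1" "a \<in> e" "b \<in> e" for e a b
  proof -
    have "finite e"
      using ends[OF that(1)] by auto
    then show ?thesis
      unfolding h_def using that(2,3) by (intro Max_ge) auto
  qed
  have ga: "group_action G V1 \<phi>1"
    using assms(2) by (simp add: acts_by_automorphisms_def)
  have "\<exists>K. \<forall>e\<in>E1. h e \<le> K"
  proof (rule bounded_if_finite_orbits)
    show "finite (orbits G E1 (\<lambda>g e. \<phi>1 g ` e))"
      using assms(5) by (simp add: finitely_many_edge_orbits_def)
  next
    fix e assume e: "e \<in> E1"
    have "group G"
      using group_hom.axioms(1)[OF group_action.group_hom[OF ga]] .
    then have one: "\<one>\<^bsub>G\<^esub> \<in> carrier G"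
      by (rule monoid.one_closed[OF group.is_monoid])
    have "\<phi>1 \<one>\<^bsub>G\<^esub> x = x" if "x \<in> V1" for x
      using group_action.id_eq_one[OF ga] that by (metis restrict_apply')
    then have "e = \<phi>1 \<one>\<^bsub>G\<^esub> ` e"
      using ends[OF e] by auto
    with one show "e \<in> orbit G (\<lambda>g e. \<phi>1 g ` e) e"
      unfolding orbit_def by blast
  next
    fix g e assume g: "g \<in> carrier G" and e: "e \<in> E1"
    have "gdist V2 E2 (f (\<phi>1 g a)) (f (\<phi>1 g b)) \<le> h e" if "a \<in> e" "b \<in> e" for a b
    proof -
      have ab: "a \<in> V1" "b \<in> V1"
        using ends[OF e] that by auto
      then have "gdist V2 E2 (f (\<phi>1 g a)) (f (\<phi>1 g b)) = gdist V2 E2 (\<phi>2 g (f a)) (\<phi>2 g (f b))"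
        using equivariant g by simp
      also have "\<dots> \<le> gdist V2 E2 (f a) (f b)"
        using gdist_action_le[OF assms(3) g assms(4)] ab assms(6) by blast
      also have "\<dots> \<le> h e"
        using h_ge e that by blast
      finally show ?thesis .
    qed
    moreover have "finite e" "e \<noteq> {}"
      using ends[OF e] by auto
    ultimately show "h (\<phi>1 g ` e) \<le> h e"
      unfolding h_def[of "\<phi>1 g ` e"] by (intro Max.boundedI) auto
  qed
  then obtain K where K: "\<forall>e\<in>E1. h e \<le> K"
    by blast
  show ?thesis
  proof (rule that)
    fix u v assume "u \<in> V1" "v \<in> V1" "{u, v} \<in> E1"
    then show "gdist V2 E2 (f u) (f v) \<le> K"
      using h_ge[of "{u, v}" u v] K by fastforce
  qed
qed

lemma equivariant_lipschitz:
  assumes "graph V1 E1" "graph_connected V1 E1" "graph_connected V2 E2"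
    and "acts_by_automorphisms G \<phi>1 V1 E1" "acts_by_automorphisms G \<phi>2 V2 E2"
    and "finitely_many_edge_orbits G \<phi>1 E1" "f ` V1 \<subseteq> V2"
    and "\<forall>g\<in>carrier G. \<forall>v\<in>V1. f (\<phi>1 g v) = \<phi>2 g (f v)"
  obtains K where "\<And>x y. x \<in> V1 \<Longrightarrow> y \<in> V1 \<Longrightarrow> gdist V2 E2 (f x) (f y) \<le> K * gdist V1 E1 x y"
proof -
  obtain K where "\<And>u v. u \<in> V1 \<Longrightarrow> v \<in> V1 \<Longrightarrow> {u, v} \<in> E1 \<Longrightarrow> gdist V2 E2 (f u) (f v) \<le> K"
    using equivariant_edge_bounded[OF assms(1,4,5,3,6,7,8)] by blast
  then show ?thesis
    using that gdist_le_mult_if_edges_bounded[OF assms(2,3,7)] by blast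
qed

lemma inv_into_equivariant:
  assumes "bij_betw \<beta> V1 V2" "\<And>g. g \<in> carrier G \<Longrightarrow> \<phi>1 g ` V1 \<subseteq> V1"
    and "\<forall>g\<in>carrier G. \<forall>v\<in>V1. \<beta> (\<phi>1 g v) = \<phi>2 g (\<beta> v)"
  shows "\<forall>g\<in>carrier G. \<forall>w\<in>V2. inv_into V1 \<beta> (\<phi>2 g w) = \<phi>1 g (inv_into V1 \<beta> w)"
proof (intro ballI)
  fix g w assume g: "g \<in> carrier G" and w: "w \<in> V2"
  have v: "inv_into V1 \<beta> w \<in> V1"
    using assms(1) w by (metis bij_betw_def inv_into_into)
  then have "\<phi>2 g w = \<beta> (\<phi>1 g (inv_into V1 \<beta> w))"
    using assms(1,3) g w by (simp add: bij_betw_inv_into_right)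
  moreover have "\<phi>1 g (inv_into V1 \<beta> w) \<in> V1"
    using assms(2)[OF g] v by blast
  ultimately show "inv_into V1 \<beta> (\<phi>2 g w) = \<phi>1 g (inv_into V1 \<beta> w)"
    using assms(1) by (simp add: bij_betw_inv_into_left)
qed

lemma quasi_isometric_if_bilipschitz_surj:
  fixes d :: "'a \<Rightarrow> 'a \<Rightarrow> real" and d' :: "'b \<Rightarrow> 'b \<Rightarrow> real"
  assumes "\<alpha> ` M = M'"
    and upper: "\<And>x y. x \<in> M \<Longrightarrow> y \<in> M \<Longrightarrow> d' (\<alpha> x) (\<alpha> y) \<le> K * d x y"
    and lower: "\<And>x y. x \<in> M \<Longrightarrow> y \<in> M \<Longrightarrow> d x y \<le> K' * d' (\<alpha> x) (\<alpha> y)"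
    and "\<And>x y. 0 \<le> d x y" "\<And>x y. 0 \<le> d' x y" "\<And>z. z \<in> M' \<Longrightarrow> d' z z = 0"
  shows "quasi_isometric M d M' d'"
proof -
  define lam where "lam = max 1 (max K K')"
  have lam: "lam > 0" "K \<le> lam" "K' \<le> lam"
    unfolding lam_def by auto
  have "d x y / lam - 0 \<le> d' (\<alpha> x) (\<alpha> y) \<and> d' (\<alpha> x) (\<alpha> y) \<le> lam * d x y + 0"
    if "x \<in> M" "y \<in> M" for x y
  proof
    have "d x y \<le> lam * d' (\<alpha> x) (\<alpha> y)"
      using lower[OF that] mult_right_mono[OF lam(3) assms(5)[of "\<alpha> x" "\<alpha> y"]] by linarith
    then show "d x y / lam - 0 \<le> d' (\<alpha> x) (\<alpha> y)"
      using lam(1) by (simp add: divide_le_eq mult.commute)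
    show "d' (\<alpha> x) (\<alpha> y) \<le> lam * d x y + 0"
      using upper[OF that] mult_right_mono[OF lam(2) assms(4)[of x y]] by linarith
  qed
  moreover have "\<exists>x\<in>M. d' z (\<alpha> x) \<le> 0" if "z \<in> M'" for z
    using assms(1,6) that by force
  ultimately show ?thesis
    unfolding quasi_isometric_def using assms(1) lam(1) order_refl[of "0::real"] by blast
qed

theorem lemma3p1:
  fixes G :: "('g, 'm) monoid_scheme"
    and \<phi>1 :: "'g \<Rightarrow> 'a \<Rightarrow> 'a" and \<phi>2 :: "'g \<Rightarrow> 'b \<Rightarrow> 'b"
    and V1 :: "'a set" and E1 :: "'a set set" and V2 :: "'b set" and E2 :: "'b set set"
    and \<beta> :: "'a \<Rightarrow> 'b"
  assumes "group G"
    and "graph V1 E1" and "graph V2 E2"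
    and "graph_connected V1 E1" and "graph_connected V2 E2"
    and "acts_by_automorphisms G \<phi>1 V1 E1" and "acts_by_automorphisms G \<phi>2 V2 E2"
    and "finitely_many_edge_orbits G \<phi>1 E1" and "finitely_many_edge_orbits G \<phi>2 E2"
    and "bij_betw \<beta> V1 V2"
    and "\<forall>g\<in>carrier G. \<forall>v\<in>V1. \<beta> (\<phi>1 g v) = \<phi>2 g (\<beta> v)"
  shows "quasi_isometric V1 (gdist V1 E1) V2 (gdist V2 E2)"
proof -
  define \<gamma> where "\<gamma> = inv_into V1 \<beta>"
  have \<beta>V1: "\<beta> ` V1 = V2"
    using assms(10) by (rule bij_betw_imp_surj_on)
  have \<gamma>V2: "\<gamma> ` V2 \<subseteq> V1"
    unfolding \<gamma>_def using bij_betw_imp_surj_on[OF bij_betw_inv_into[OF assms(10)]] by simp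
  have \<gamma>\<beta>: "\<gamma> (\<beta> x) = x" if "x \<in> V1" for x
    unfolding \<gamma>_def using bij_betw_inv_into_left[OF assms(10) that] .
  have \<gamma>_equivariant: "\<forall>g\<in>carrier G. \<forall>w\<in>V2. \<gamma> (\<phi>2 g w) = \<phi>1 g (\<gamma> w)"
    unfolding \<gamma>_def
    using inv_into_equivariant[OF assms(10) acts_by_automorphisms_image_subset[OF assms(6)] assms(11)] .
  obtain K1 where upper:
    "\<And>x y. x \<in> V1 \<Longrightarrow> y \<in> V1 \<Longrightarrow> gdist V2 E2 (\<beta> x) (\<beta> y) \<le> K1 * gdist V1 E1 x y"
    using equivariant_lipschitz[OF assms(2,4,5,6,7,8) equalityD1[OF \<beta>V1] assms(11)] by blast
  obtain K2 where K2:
    "\<And>x y. x \<in> V2 \<Longrightarrow> y \<in> V2 \<Longrightarrow> gdist V1 E1 (\<gamma> x) (\<gamma> y) \<le> K2 * gdist V2 E2 x y"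
    using equivariant_lipschitz[OF assms(3,5,4,7,6,9) \<gamma>V2 \<gamma>_equivariant] by blast
  have lower: "gdist V1 E1 x y \<le> K2 * gdist V2 E2 (\<beta> x) (\<beta> y)" if "x \<in> V1" "y \<in> V1" for x y
    using K2[of "\<beta> x" "\<beta> y"] \<beta>V1 that by (auto simp: \<gamma>\<beta>)
  show ?thesis
    by (rule quasi_isometric_if_bilipschitz_surj[where d = "gdist V1 E1" and d' = "gdist V2 E2",
          OF \<beta>V1 upper lower])
      (simp_all add: gdist_nonneg gdist_self)
qed

end
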